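(* There is a universal constant $C>0$ such that for all $d,k\ge1$ and all $\alpha\in(0,1]$, $\mathrm{fat}_\alpha(\mathcal{H}_{k,d})\le\frac{Ck^2}{\alpha^2}\log^3\!\big(\frac{ek}{\alpha}\big)$.
   Context: $\mathcal{X}=\{x\in[-1,1]^d:\|x\|_2\le1\}$, $\mathrm{clip}(z)=\max\{-1,\min\{1,z\}\}$, $\mathcal{H}_{k,d}=\{x\mapsto\mathrm{clip}(\sum_{j=1}^ka_j\max\{0,w^j\cdot x\}): a_j\in[-1,1],\|w^j\|_2\le1\}$. Sequential fat-shattering dimension: for $\mathcal{F}\subseteq\mathbb{R}^{\mathcal X}$ and $\alpha>0$, complete binary trees $(x_u)_{u\in\{0,1\}^{<m}}\subseteq\mathcal X$ and $(s_u)_{u\in\{0,1\}^{<m}}\subseteq\mathbb R$ are $\alpha$-shattered by $\mathcal F$ if for every $b\in\{0,1\}^m$ there is $f_b\in\mathcal F$ with, for all $t<m$, $f_b(x_{b_{\le t}})\ge s_{b_{\le t}}+\alpha$ if $b_{t+1}=1$ and $f_b(x_{b_{\le t}})\le s_{b_{\le t}}-\alpha$ if $b_{t+1}=0$; $\mathrm{fat}_\alpha(\mathcal F)$ is the supremum of such $m$ (0 if none, $\infty$ if unbounded). *)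

theory Defs
  imports "HOL-Analysis.Analysis" "HOL-Library.Extended_Real"
begin

text \<open>Points of R^d are represented as functions nat => real vanishing outside {..<d}.\<close>

definition dotd :: "nat \<Rightarrow> (nat \<Rightarrow> real) \<Rightarrow> (nat \<Rightarrow> real) \<Rightarrow> real" where
  "dotd d w x = (\<Sum>i<d. w i * x i)"

definition vecs :: "nat \<Rightarrow> (nat \<Rightarrow> real) set" where
  "vecs d = {x. \<forall>i\<ge>d. x i = 0}"

definition Xdom :: "nat \<Rightarrow> (nat \<Rightarrow> real) set" where
  "Xdom d = {x \<in> vecs d. (\<forall>i<d. \<bar>x i\<bar> \<le> 1) \<and> sqrt (dotd d x x) \<le> 1}"

definition clip :: "real \<Rightarrow> real" where
  "clip z = max (-1) (min 1 z)"

definition Hkd :: "nat \<Rightarrow> nat \<Rightarrow> ((nat \<Rightarrow> real) \<Rightarrow> real) set" where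
  "Hkd k d = {(\<lambda>x. clip (\<Sum>j<k. a j * max 0 (dotd d (w j) x))) | a w.
      (\<forall>j<k. \<bar>a j\<bar> \<le> 1) \<and> (\<forall>j<k. w j \<in> vecs d \<and> sqrt (dotd d (w j) (w j)) \<le> 1)}"

text \<open>Complete binary trees of depth m: nodes are bit strings u of length < m;
  b_{<=t} is take t b and b_{t+1} is b ! t.\<close>

definition seq_shattered ::
  "('x \<Rightarrow> real) set \<Rightarrow> 'x set \<Rightarrow> real \<Rightarrow> nat \<Rightarrow> (bool list \<Rightarrow> 'x) \<Rightarrow> (bool list \<Rightarrow> real) \<Rightarrow> bool" where
  "seq_shattered F X \<alpha> m xt st \<longleftrightarrow>
     (\<forall>u. length u < m \<longrightarrow> xt u \<in> X) \<and>
     (\<forall>b. length b = m \<longrightarrow> (\<exists>f\<in>F. \<forall>t<m.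
        (b ! t \<longrightarrow> f (xt (take t b)) \<ge> st (take t b) + \<alpha>) \<and>
        (\<not> b ! t \<longrightarrow> f (xt (take t b)) \<le> st (take t b) - \<alpha>)))"

definition seq_fat :: "real \<Rightarrow> ('x \<Rightarrow> real) set \<Rightarrow> 'x set \<Rightarrow> enat" where
  "seq_fat \<alpha> F X = Sup (enat ` {m. \<exists>xt st. seq_shattered F X \<alpha> m xt st})"

end

theory Submission
  imports Defs "HOL-Probability.Hoeffding"
begin

text \<open>Let a tree of depth \<open>m\<close> be shattered at scale \<open>\<alpha>\<close>. Since the thresholds lie in
  \<open>[-1 + \<alpha>, 1 - \<alpha>]\<close>, clipping is irrelevant, and along every path the unclipped network
  chosen for that path beats the thresholds by \<open>\<alpha>\<close> at each node; so its signed sum along the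
  path is at least \<open>m\<alpha>\<close>, while the signed sum of the thresholds averages to zero over all
  paths. The network is a combination of \<open>k\<close> ReLU units with coefficients in \<open>[-1, 1]\<close>.
  A perceptron-type greedy argument approximates a unit along a path to accuracy \<open>2^-j\<close> by a
  unit whose weight vector is \<open>2^-j\<close> times a signed sum of at most \<open>4^j\<close> tree points, and
  there are at most \<open>(2m + 1)^(4^j)\<close> such approximations. Chaining over the dyadic scales, with
  the exponential-moment maximal inequality for finitely many tree martingales at each scale,
  bounds the average signed sum of a unit by \<open>m/2^J + 3 sqrt 6 J sqrt (m ln (2m + 1))\<close>.
  Choosing \<open>2^J \<ge> 2k/\<alpha>\<close> with \<open>J \<le> 3 ln (ek/\<alpha>)\<close> gives \<open>m \<alpha>\<^sup>2 \<le> 216 k\<^sup>2 J\<^sup>2 ln (2m + 1)\<close>,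
  which solves to the stated bound.\<close>

section \<open>Sums over the paths of a binary tree\<close>

lemma exp_plus_exp_minus_le: "exp (a::real) + exp (-a) \<le> 2 * exp (a^2 / 2)"
proof -
  have nonneg: "exp b + exp (-b) \<le> 2 * exp (b^2 / 2)" if "b \<ge> 0" for b :: real
  proof -
    have "-(2*b) * (1/2) + ln (1 + (1/2) * (exp (2*b) - 1)) \<le> (2*b)^2 / 8"
      using Hoeffdings_lemma_aux[of "2*b" "1/2"] that by simp
    hence "ln ((1 + exp (2*b)) / 2) \<le> b + b^2 / 2"
      by (simp add: power2_eq_square field_simps)
    hence "exp (ln ((1 + exp (2*b)) / 2)) \<le> exp (b + b^2 / 2)"
      by simp
    hence "(1 + exp (2*b)) / 2 \<le> exp (b + b^2 / 2)"
      by (simp add: add_pos_pos)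
    hence "exp (-b) * ((1 + exp (2*b)) / 2) \<le> exp (-b) * exp (b + b^2 / 2)"
      by (intro mult_left_mono) auto
    thus ?thesis
      by (simp add: field_simps flip: exp_add)
  qed
  show ?thesis
    using nonneg[of a] nonneg[of "-a"] by (cases "a \<ge> 0") (auto simp: add.commute)
qed

text \<open>Divided by \<open>2^m\<close>, \<open>path_sum m F\<close> is the expectation of \<open>F\<close> over a uniformly random
  path of length \<open>m\<close>.\<close>

fun path_sum :: "nat \<Rightarrow> (bool list \<Rightarrow> real) \<Rightarrow> real" where
  "path_sum 0 F = F []"
| "path_sum (Suc m) F = path_sum m (\<lambda>b. F (True # b)) + path_sum m (\<lambda>b. F (False # b))"

lemma path_sum_mono:
  "(\<And>b. length b = m \<Longrightarrow> F b \<le> G b) \<Longrightarrow> path_sum m F \<le> path_sum m G"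
proof (induction m arbitrary: F G)
  case (Suc m)
  have "path_sum m (\<lambda>b. F (c # b)) \<le> path_sum m (\<lambda>b. G (c # b))" for c
    by (rule Suc.IH) (simp add: Suc.prems)
  then show ?case
    by (simp add: add_mono)
qed simp

lemma path_sum_add: "path_sum m (\<lambda>b. F b + G b) = path_sum m F + path_sum m G"
  by (induction m arbitrary: F G) auto

lemma path_sum_diff: "path_sum m (\<lambda>b. F b - G b) = path_sum m F - path_sum m G"
  by (induction m arbitrary: F G) auto

lemma path_sum_cmult: "path_sum m (\<lambda>b. c * F b) = c * path_sum m F"
  by (induction m arbitrary: F) (auto simp: algebra_simps)

lemma path_sum_const: "path_sum m (\<lambda>b. c) = 2^m * c"
  by (induction m) auto

lemma path_sum_sum: "path_sum m (\<lambda>b. \<Sum>j\<in>A. F j b) = (\<Sum>j\<in>A. path_sum m (F j))"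
  by (induction m arbitrary: F) (simp_all add: sum.distrib)

definition sign_of :: "bool \<Rightarrow> real" where
  "sign_of c = (if c then 1 else -1)"

definition signed_path_sum :: "nat \<Rightarrow> (bool list \<Rightarrow> real) \<Rightarrow> bool list \<Rightarrow> real" where
  "signed_path_sum m f b = (\<Sum>t<m. sign_of (b ! t) * f (take t b))"

lemma signed_path_sum_Cons:
  "signed_path_sum (Suc m) f (c # b) = sign_of c * f [] + signed_path_sum m (\<lambda>u. f (c # u)) b"
  unfolding signed_path_sum_def sum.lessThan_Suc_shift by simp

lemma signed_path_sum_add:
  "signed_path_sum m (\<lambda>u. f u + g u) b = signed_path_sum m f b + signed_path_sum m g b"
  unfolding signed_path_sum_def by (simp add: sum.distrib algebra_simps)

lemma signed_path_sum_diff: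
  "signed_path_sum m (\<lambda>u. f u - g u) b = signed_path_sum m f b - signed_path_sum m g b"
  unfolding signed_path_sum_def by (simp add: sum_subtractf algebra_simps)

lemma signed_path_sum_cmult:
  "signed_path_sum m (\<lambda>u. c * f u) b = c * signed_path_sum m f b"
  unfolding signed_path_sum_def by (simp add: sum_distrib_left algebra_simps)

lemma signed_path_sum_sum:
  "signed_path_sum m (\<lambda>u. \<Sum>j\<in>A. f j u) b = (\<Sum>j\<in>A. signed_path_sum m (f j) b)"
  unfolding signed_path_sum_def by (simp add: sum_distrib_left sum.swap[of _ A])

lemma signed_path_sum_cong:
  "(\<And>t. t < m \<Longrightarrow> f (take t b) = g (take t b)) \<Longrightarrow> signed_path_sum m f b = signed_path_sum m g b"
  unfolding signed_path_sum_def by (intro sum.cong) auto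

lemma abs_signed_path_sum_le:
  "(\<And>t. t < m \<Longrightarrow> \<bar>f (take t b)\<bar> \<le> e) \<Longrightarrow> \<bar>signed_path_sum m f b\<bar> \<le> real m * e"
proof -
  assume bound: "\<And>t. t < m \<Longrightarrow> \<bar>f (take t b)\<bar> \<le> e"
  have "\<bar>signed_path_sum m f b\<bar> \<le> (\<Sum>t<m. \<bar>sign_of (b ! t) * f (take t b)\<bar>)"
    unfolding signed_path_sum_def by (rule sum_abs)
  also have "\<dots> \<le> (\<Sum>t<m. e)"
    by (intro sum_mono) (use bound in \<open>auto simp: sign_of_def abs_mult\<close>)
  finally show ?thesis by simp
qed

lemma path_sum_signed_path_sum: "path_sum m (signed_path_sum m f) = 0"
  by (induction m arbitrary: f)
    (simp_all add: signed_path_sum_def[of 0] signed_path_sum_Cons path_sum_add path_sum_diff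
      path_sum_const sign_of_def)

text \<open>Azuma--Hoeffding for tree martingales: induction on the depth, one step being
  \<open>cosh a \<le> exp (a\<^sup>2 / 2)\<close>.\<close>

lemma path_sum_exp_signed_path_sum_le:
  assumes "\<And>u. \<bar>f u\<bar> \<le> c"
  shows "path_sum m (\<lambda>b. exp (l * signed_path_sum m f b)) \<le> 2^m * exp (real m * l^2 * c^2 / 2)"
  using assms
proof (induction m arbitrary: f)
  case 0
  then show ?case by (simp add: signed_path_sum_def)
next
  case (Suc m)
  define E where "E = 2^m * exp (real m * l^2 * c^2 / 2)"
  define a where "a = l * f []"
  have branch: "path_sum m (\<lambda>b. exp (l * signed_path_sum (Suc m) f (c # b)))
      \<le> exp (sign_of c * a) * E" for c
  proof -
    have "path_sum m (\<lambda>b. exp (l * signed_path_sum (Suc m) f (c # b)))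
        = exp (sign_of c * a) * path_sum m (\<lambda>b. exp (l * signed_path_sum m (\<lambda>u. f (c # u)) b))"
      by (simp add: signed_path_sum_Cons a_def distrib_left exp_add path_sum_cmult algebra_simps)
    also have "\<dots> \<le> exp (sign_of c * a) * E"
      unfolding E_def by (intro mult_left_mono Suc.IH) (auto simp: Suc.prems)
    finally show ?thesis .
  qed
  have "(f [])^2 \<le> c^2"
    using power_mono[OF Suc.prems[of "[]"] abs_ge_zero, of 2] by simp
  hence "a^2 \<le> l^2 * c^2"
    unfolding a_def power_mult_distrib by (intro mult_left_mono) auto
  hence "exp (a^2 / 2) \<le> exp (l^2 * c^2 / 2)"
    by simp
  hence "exp a + exp (-a) \<le> 2 * exp (l^2 * c^2 / 2)"
    using exp_plus_exp_minus_le[of a] by linarith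
  hence "(exp a + exp (-a)) * E \<le> 2 * exp (l^2 * c^2 / 2) * E"
    unfolding E_def by (intro mult_right_mono) auto
  also have "\<dots> = 2^Suc m * exp (real (Suc m) * l^2 * c^2 / 2)"
    unfolding E_def by (simp add: algebra_simps add_divide_distrib flip: exp_add)
  finally show ?case
    using branch[of True] branch[of False] by (simp add: sign_of_def algebra_simps)
qed

text \<open>Jensen's inequality for the average over paths, via the tangent of \<open>exp\<close> at the mean.\<close>

lemma exp_path_sum_le:
  "2^m * exp (path_sum m F / 2^m) \<le> path_sum m (\<lambda>b. exp (F b))"
proof -
  define a where "a = path_sum m F / 2^m"
  have "exp a * (1 + F b - a) \<le> exp (F b)" for b
  proof -
    have "exp a * (1 + (F b - a)) \<le> exp a * exp (F b - a)"
      by (intro mult_left_mono exp_ge_add_one_self) auto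
    thus ?thesis
      by (simp add: add_diff_eq flip: exp_add)
  qed
  hence "path_sum m (\<lambda>b. exp a * (1 - a) + exp a * F b) \<le> path_sum m (\<lambda>b. exp (F b))"
    by (intro path_sum_mono) (simp add: algebra_simps)
  moreover have "path_sum m (\<lambda>b. exp a * (1 - a) + exp a * F b)
      = exp a * (2^m * (1 - a) + path_sum m F)"
    by (simp only: path_sum_add path_sum_const path_sum_cmult) (simp add: algebra_simps)
  moreover have "2^m * (1 - a) + path_sum m F = 2^m"
    by (simp add: a_def field_simps)
  ultimately show ?thesis
    by (simp add: a_def mult.commute)
qed

lemma path_sum_Max_signed_path_sum_le:
  assumes "finite D" "D \<noteq> {}" "\<And>f u. f \<in> D \<Longrightarrow> \<bar>f u\<bar> \<le> c" "l > 0"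
  shows "path_sum m (\<lambda>b. Max ((\<lambda>f. signed_path_sum m f b) ` D))
    \<le> 2^m * (ln (real (card D)) / l + real m * l * c^2 / 2)"
proof -
  define M where "M b = Max ((\<lambda>f. signed_path_sum m f b) ` D)" for b
  define E where "E = exp (real m * l^2 * c^2 / 2)"
  have "exp (l * M b) \<le> (\<Sum>f\<in>D. exp (l * signed_path_sum m f b))" for b
  proof -
    have "M b \<in> (\<lambda>f. signed_path_sum m f b) ` D"
      unfolding M_def using assms(1,2) by (intro Max_in) auto
    then obtain f where "f \<in> D" "M b = signed_path_sum m f b"
      by auto
    thus ?thesis
      using assms(1) by (auto intro: member_le_sum)
  qed
  hence "path_sum m (\<lambda>b. exp (l * M b)) \<le> (\<Sum>f\<in>D. path_sum m (\<lambda>b. exp (l * signed_path_sum m f b)))"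
    by (subst path_sum_sum[symmetric]) (rule path_sum_mono)
  also have "\<dots> \<le> (\<Sum>f\<in>D. 2^m * E)"
    unfolding E_def by (intro sum_mono path_sum_exp_signed_path_sum_le) (use assms(3) in auto)
  finally have "path_sum m (\<lambda>b. exp (l * M b)) \<le> 2^m * (real (card D) * E)"
    by (simp add: algebra_simps)
  hence "2^m * exp (path_sum m (\<lambda>b. l * M b) / 2^m) \<le> 2^m * (real (card D) * E)"
    using exp_path_sum_le[of m "\<lambda>b. l * M b"] by linarith
  hence "exp (l * path_sum m M / 2^m) \<le> real (card D) * E"
    by (simp add: path_sum_cmult)
  moreover have "real (card D) > 0"
    using assms(1,2) by (simp add: card_gt_0_iff)
  ultimately have "l * path_sum m M / 2^m \<le> ln (real (card D)) + real m * l^2 * c^2 / 2"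
    by (simp add: ln_ge_iff[symmetric] ln_mult E_def)
  thus ?thesis
    using assms(4) unfolding M_def by (simp add: field_simps power2_eq_square)
qed

lemma path_sum_Max_signed_path_sum_le_sqrt:
  assumes "finite D" "D \<noteq> {}" "\<And>f u. f \<in> D \<Longrightarrow> \<bar>f u\<bar> \<le> c" "c > 0"
    and "ln (real (card D)) \<le> L" "L > 0" "m > 0"
  shows "path_sum m (\<lambda>b. Max ((\<lambda>f. signed_path_sum m f b) ` D)) \<le> 2^m * (c * sqrt (2 * m * L))"
proof -
  define q where "q = sqrt (m * L / 2)"
  have "q > 0" "q^2 = m * L / 2"
    using assms(6,7) unfolding q_def by simp_all
  define l where "l = 2 * q / (m * c)"
  have "l > 0"
    using \<open>q > 0\<close> assms(4,7) unfolding l_def by simp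
  have "ln (real (card D)) / l \<le> L / l"
    using assms(5) \<open>l > 0\<close> by (intro divide_right_mono) auto
  also have "L / l = c * q"
    using \<open>q^2 = m * L / 2\<close> \<open>q > 0\<close> assms(4,7) unfolding l_def
    by (simp add: field_simps power2_eq_square)
  finally have "ln (real (card D)) / l + m * l * c^2 / 2 \<le> c * (2 * q)"
    using \<open>q > 0\<close> assms(4,7) unfolding l_def by (simp add: field_simps power2_eq_square)
  also have "2 * q = sqrt ((2 * q)^2)"
    using \<open>q > 0\<close> by (simp only: real_sqrt_abs abs_of_pos)
  also have "(2 * q)^2 = 2 * real m * L"
    using \<open>q^2 = m * L / 2\<close> by (simp add: power_mult_distrib algebra_simps)
  finally have "2^m * (ln (real (card D)) / l + m * l * c^2 / 2) \<le> 2^m * (c * sqrt (2 * real m * L))"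
    by (intro mult_left_mono) auto
  moreover have "path_sum m (\<lambda>b. Max ((\<lambda>f. signed_path_sum m f b) ` D))
      \<le> 2^m * (ln (real (card D)) / l + m * l * c^2 / 2)"
    by (rule path_sum_Max_signed_path_sum_le) (simp_all add: assms(1-3) \<open>l > 0\<close>)
  ultimately show ?thesis
    by linarith
qed

section \<open>Greedy approximation of a ReLU unit along a path\<close>

definition relu :: "real \<Rightarrow> real" where
  "relu z = max 0 z"

lemma abs_relu_diff_le: "\<bar>relu a - relu b\<bar> \<le> \<bar>a - b\<bar>"
  unfolding relu_def by (auto simp: max_def)

definition sqdist :: "nat \<Rightarrow> (nat \<Rightarrow> real) \<Rightarrow> (nat \<Rightarrow> real) \<Rightarrow> real" where
  "sqdist d V w = dotd d (\<lambda>i. V i - w i) (\<lambda>i. V i - w i)"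

lemma sqdist_nonneg: "sqdist d V w \<ge> 0"
  unfolding sqdist_def dotd_def by (intro sum_nonneg) auto

lemma sqdist_add_scaled:
  "sqdist d (\<lambda>i. V i + s * x i) w
     = sqdist d V w + 2 * s * (dotd d V x - dotd d w x) + s^2 * dotd d x x"
  unfolding sqdist_def dotd_def
  by (simp add: power2_eq_square algebra_simps sum.distrib sum_distrib_left sum_subtractf)

lemma dotd_le_half_sum: "dotd d w x \<le> (dotd d w w + dotd d x x) / 2"
proof -
  have "w i * x i \<le> (w i * w i + x i * x i) / 2" for i
    using sum_squares_bound[of "w i" "x i"] by (simp add: power2_eq_square)
  hence "dotd d w x \<le> (\<Sum>i<d. (w i * w i + x i * x i) / 2)"
    unfolding dotd_def by (intro sum_mono)
  also have "\<dots> = (dotd d w w + dotd d x x) / 2"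
    unfolding dotd_def by (simp add: sum.distrib add_divide_distrib flip: sum_divide_distrib)
  finally show ?thesis .
qed

text \<open>Since \<open>relu\<close> is 1-Lipschitz, \<open>\<langle>V, x\<rangle>\<close> and \<open>\<langle>w, x\<rangle>\<close> differ by
  more than \<open>\<beta>\<close>, and the correction moves \<open>\<langle>V, x\<rangle>\<close> towards \<open>\<langle>w, x\<rangle>\<close>. Because each step gains
  \<open>\<beta>\<^sup>2\<close> and \<open>|V - w|\<^sup>2 \<le> 1\<close> initially, at most \<open>1/\<beta>\<^sup>2\<close> corrections are ever made.\<close>

lemma sqdist_greedy_step:
  fixes V w x :: "nat \<Rightarrow> real" and \<beta> :: real
  assumes "\<beta> > 0" "dotd d x x \<le> 1" "\<bar>relu (dotd d V x) - relu (dotd d w x)\<bar> > \<beta>"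
  shows "\<exists>\<sigma>::int. \<bar>\<sigma>\<bar> = (1::int) \<and> sqdist d (\<lambda>i. V i + \<sigma> * \<beta> * x i) w + \<beta>^2 \<le> sqdist d V w"
proof -
  define g where "g = dotd d V x - dotd d w x"
  have "\<bar>g\<bar> > \<beta>"
    using assms(3) abs_relu_diff_le[of "dotd d V x" "dotd d w x"] unfolding g_def by linarith
  define \<sigma> :: int where "\<sigma> = (if g > 0 then -1 else 1)"
  have "\<sigma> * g < - \<beta>"
    using \<open>\<bar>g\<bar> > \<beta>\<close> unfolding \<sigma>_def by auto
  hence "\<beta> * (\<sigma> * g) \<le> \<beta> * (- \<beta>)"
    using assms(1) by (intro mult_left_mono) auto
  hence "2 * (\<sigma> * \<beta>) * g \<le> - 2 * \<beta>^2"
    by (simp add: power2_eq_square algebra_simps)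
  moreover have "(\<sigma> * \<beta>)^2 * dotd d x x \<le> \<beta>^2"
    using assms(2) unfolding \<sigma>_def by (simp add: mult_left_le)
  moreover have "sqdist d (\<lambda>i. V i + \<sigma> * \<beta> * x i) w
      = sqdist d V w + 2 * (\<sigma> * \<beta>) * g + (\<sigma> * \<beta>)^2 * dotd d x x"
    unfolding g_def by (rule sqdist_add_scaled)
  ultimately have "sqdist d (\<lambda>i. V i + \<sigma> * \<beta> * x i) w + \<beta>^2 \<le> sqdist d V w"
    by linarith
  moreover have "\<bar>\<sigma>\<bar> = 1"
    unfolding \<sigma>_def by simp
  ultimately show ?thesis
    by blast
qed

lemma relu_greedy_descent:
  fixes V w x :: "nat \<Rightarrow> real" and \<beta> :: real and N :: nat
  assumes "\<beta> > 0" "dotd d x x \<le> 1" "sqdist d V w < N * \<beta>^2"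
  shows "\<exists>z::int. \<bar>real_of_int z\<bar> * \<beta>^2 + sqdist d (\<lambda>i. V i + z * \<beta> * x i) w \<le> sqdist d V w
    \<and> \<bar>relu (dotd d (\<lambda>i. V i + z * \<beta> * x i) x) - relu (dotd d w x)\<bar> \<le> \<beta>"
  using assms(3)
proof (induction N arbitrary: V)
  case 0
  then show ?case
    by (simp add: leD[OF sqdist_nonneg])
next
  case (Suc N)
  show ?case
  proof (cases "\<bar>relu (dotd d V x) - relu (dotd d w x)\<bar> \<le> \<beta>")
    case True
    then show ?thesis
      by (intro exI[of _ 0]) simp
  next
    case False
    from sqdist_greedy_step[OF assms(1,2) False[unfolded not_le]]
    obtain \<sigma> :: int where "\<bar>\<sigma>\<bar> = 1" and closer: "sqdist d (\<lambda>i. V i + \<sigma> * \<beta> * x i) w + \<beta>^2 \<le> sqdist d V w"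
      by blast
    with Suc.prems obtain z :: int where z:
      "\<bar>real_of_int z\<bar> * \<beta>^2 + sqdist d (\<lambda>i. (V i + \<sigma> * \<beta> * x i) + z * \<beta> * x i) w
         \<le> sqdist d (\<lambda>i. V i + \<sigma> * \<beta> * x i) w"
      "\<bar>relu (dotd d (\<lambda>i. (V i + \<sigma> * \<beta> * x i) + z * \<beta> * x i) x) - relu (dotd d w x)\<bar> \<le> \<beta>"
      using Suc.IH[of "\<lambda>i. V i + \<sigma> * \<beta> * x i"] by (auto simp: algebra_simps)
    have shift: "(\<lambda>i. (V i + \<sigma> * \<beta> * x i) + z * \<beta> * x i) = (\<lambda>i. V i + (z + \<sigma>) * \<beta> * x i)"
      by (simp add: algebra_simps)
    have "\<bar>real_of_int (z + \<sigma>)\<bar> \<le> \<bar>real_of_int z\<bar> + 1"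
      using abs_triangle_ineq[of "real_of_int z" "real_of_int \<sigma>"] \<open>\<bar>\<sigma>\<bar> = 1\<close> by simp
    from mult_right_mono[OF this zero_le_power2]
    have "\<bar>real_of_int (z + \<sigma>)\<bar> * \<beta>^2 \<le> \<bar>real_of_int z\<bar> * \<beta>^2 + \<beta>^2"
      by (simp add: distrib_right)
    with z closer show ?thesis
      unfolding shift by (intro exI[of _ "z + \<sigma>"] conjI) linarith+
  qed
qed

lemma relu_greedy_at_point:
  fixes V w x :: "nat \<Rightarrow> real" and \<beta> :: real
  assumes "\<beta> > 0" "dotd d x x \<le> 1"
  shows "\<exists>z::int. \<bar>real_of_int z\<bar> * \<beta>^2 + sqdist d (\<lambda>i. V i + z * \<beta> * x i) w \<le> sqdist d V w
    \<and> \<bar>relu (dotd d (\<lambda>i. V i + z * \<beta> * x i) x) - relu (dotd d w x)\<bar> \<le> \<beta>"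
proof -
  obtain N :: nat where "sqdist d V w / \<beta>^2 < N"
    using reals_Archimedean2 by blast
  hence "sqdist d V w < N * \<beta>^2"
    using assms(1) by (simp add: pos_divide_less_eq)
  from relu_greedy_descent[OF assms this] show ?thesis .
qed

text \<open>A list of pairs \<open>(t, c)\<close> records corrections made by the greedy procedure: each pair
  adds \<open>sign_of c \<cdot> \<beta>\<close> times the point visited at time \<open>t\<close> to the weight vector.\<close>

definition net_sign :: "(nat \<times> bool) list \<Rightarrow> nat \<Rightarrow> real" where
  "net_sign hs t = real (count_list hs (t, True)) - real (count_list hs (t, False))"

definition path_weight ::
  "real \<Rightarrow> (nat \<times> bool) list \<Rightarrow> (bool list \<Rightarrow> nat \<Rightarrow> real) \<Rightarrow> bool list \<Rightarrow> nat \<Rightarrow> nat \<Rightarrow> real"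
  where "path_weight \<beta> hs X b t = (\<lambda>i. \<Sum>s<t. \<beta> * net_sign hs s * X (take s b) i)"

text \<open>The approximation at node \<open>u\<close> uses the corrections made up to and including \<open>u\<close>;
  it depends only on \<open>u\<close>, so it is a function on the nodes of the tree.\<close>

definition relu_approx ::
  "real \<Rightarrow> (nat \<times> bool) list \<Rightarrow> (bool list \<Rightarrow> nat \<Rightarrow> real) \<Rightarrow> nat \<Rightarrow> bool list \<Rightarrow> real"
  where "relu_approx \<beta> hs X d u = relu (dotd d (path_weight \<beta> hs X u (Suc (length u))) (X u))"

lemma net_sign_Nil [simp]: "net_sign [] t = 0"
  unfolding net_sign_def by simp

lemma net_sign_append: "net_sign (hs @ hs') t = net_sign hs t + net_sign hs' t"
  unfolding net_sign_def by simp

lemma net_sign_eq_0: "(\<And>c. (t, c) \<notin> set hs) \<Longrightarrow> net_sign hs t = 0"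
  unfolding net_sign_def by (simp add: count_list_0_iff)

lemma count_list_replicate: "count_list (replicate n a) x = (if a = x then n else 0)"
  by (induction n) auto

lemma net_sign_replicate_int:
  "net_sign (replicate (nat \<bar>z\<bar>) (t, z \<ge> 0)) s = (if s = t then real_of_int z else 0)"
  unfolding net_sign_def count_list_replicate by auto

lemma path_weight_Suc:
  "path_weight \<beta> hs X b (Suc t) = (\<lambda>i. path_weight \<beta> hs X b t i + \<beta> * net_sign hs t * X (take t b) i)"
  unfolding path_weight_def by simp

lemma path_weight_Nil: "path_weight \<beta> [] X b t = (\<lambda>i. 0)"
  unfolding path_weight_def by simp

lemma path_weight_append_replicate:
  "s \<le> t \<Longrightarrow> path_weight \<beta> (hs @ replicate (nat \<bar>z\<bar>) (t, z \<ge> 0)) X b s = path_weight \<beta> hs X b s"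
  unfolding path_weight_def by (intro ext sum.cong) (auto simp: net_sign_append net_sign_replicate_int)

lemma path_weight_Suc_append_replicate:
  assumes "set hs \<subseteq> {..<t} \<times> UNIV"
  shows "path_weight \<beta> (hs @ replicate (nat \<bar>z\<bar>) (t, z \<ge> 0)) X b (Suc t)
    = (\<lambda>i. path_weight \<beta> hs X b t i + z * \<beta> * X (take t b) i)"
proof -
  have "net_sign hs t = 0"
    using assms by (intro net_sign_eq_0) auto
  thus ?thesis
    unfolding path_weight_Suc path_weight_append_replicate[OF order.refl]
    by (simp add: net_sign_append net_sign_replicate_int algebra_simps)
qed

lemma relu_approx_Nil: "relu_approx \<beta> [] X d u = 0"
  unfolding relu_approx_def path_weight_Nil dotd_def relu_def by simp

lemma relu_approx_take:
  assumes "t \<le> length b"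
  shows "relu_approx \<beta> hs X d (take t b) = relu (dotd d (path_weight \<beta> hs X b (Suc t)) (X (take t b)))"
proof -
  have "path_weight \<beta> hs X (take t b) (Suc t) = path_weight \<beta> hs X b (Suc t)"
    unfolding path_weight_def by (intro ext sum.cong) (auto simp: min_def)
  thus ?thesis
    using assms unfolding relu_approx_def by (simp add: min_def)
qed

lemma greedy_path_corrections:
  fixes \<beta> :: real
  assumes "\<beta> > 0" and points: "\<And>t. t < m \<Longrightarrow> dotd d (X (take t b)) (X (take t b)) \<le> 1"
  shows "t \<le> m \<Longrightarrow> \<exists>hs. set hs \<subseteq> {..<t} \<times> UNIV
    \<and> length hs * \<beta>^2 + sqdist d (path_weight \<beta> hs X b t) w \<le> dotd d w w
    \<and> (\<forall>s<t. \<bar>relu (dotd d (path_weight \<beta> hs X b (Suc s)) (X (take s b)))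
                 - relu (dotd d w (X (take s b)))\<bar> \<le> \<beta>)"
proof (induction t)
  case 0
  then show ?case
    by (intro exI[of _ "[]"]) (simp add: path_weight_Nil sqdist_def dotd_def)
next
  case (Suc t)
  then obtain hs where hs: "set hs \<subseteq> {..<t} \<times> UNIV"
    "length hs * \<beta>^2 + sqdist d (path_weight \<beta> hs X b t) w \<le> dotd d w w"
    "\<forall>s<t. \<bar>relu (dotd d (path_weight \<beta> hs X b (Suc s)) (X (take s b)))
             - relu (dotd d w (X (take s b)))\<bar> \<le> \<beta>"
    by auto
  define V where "V = path_weight \<beta> hs X b t"
  define x where "x = X (take t b)"
  have "dotd d x x \<le> 1"
    using points Suc.prems unfolding x_def by simp
  then obtain z :: int where z:
    "\<bar>real_of_int z\<bar> * \<beta>^2 + sqdist d (\<lambda>i. V i + z * \<beta> * x i) w \<le> sqdist d V w"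
    "\<bar>relu (dotd d (\<lambda>i. V i + z * \<beta> * x i) x) - relu (dotd d w x)\<bar> \<le> \<beta>"
    using relu_greedy_at_point[OF assms(1), of d x V w] by blast
  define hs' where "hs' = hs @ replicate (nat \<bar>z\<bar>) (t, z \<ge> 0)"
  have new_weight: "path_weight \<beta> hs' X b (Suc t) = (\<lambda>i. V i + z * \<beta> * x i)"
    unfolding hs'_def V_def x_def using hs(1) by (rule path_weight_Suc_append_replicate)
  have old_weights: "path_weight \<beta> hs' X b (Suc s) = path_weight \<beta> hs X b (Suc s)" if "s < t" for s
    unfolding hs'_def using that by (intro path_weight_append_replicate) simp
  have "length hs' * \<beta>^2 + sqdist d (path_weight \<beta> hs' X b (Suc t)) w \<le> dotd d w w"
    using hs(2) z(1) unfolding new_weight V_def by (simp add: hs'_def distrib_right)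
  moreover have "set hs' \<subseteq> {..<Suc t} \<times> UNIV"
    using hs(1) by (auto simp: hs'_def)
  moreover have "\<bar>relu (dotd d (path_weight \<beta> hs' X b (Suc s)) (X (take s b)))
      - relu (dotd d w (X (take s b)))\<bar> \<le> \<beta>" if "s < Suc t" for s
    using that hs(3) old_weights z(2) new_weight unfolding x_def
    by (cases "s < t") (auto simp: not_less_less_Suc_eq)
  ultimately show ?case
    by blast
qed

lemma exists_sparse_relu_approx:
  fixes \<beta> :: real
  assumes "\<beta> > 0" "length b = m"
    and "\<And>t. t < m \<Longrightarrow> dotd d (X (take t b)) (X (take t b)) \<le> 1" and "dotd d w w \<le> 1"
  shows "\<exists>hs. set hs \<subseteq> {..<m} \<times> UNIV \<and> length hs * \<beta>^2 \<le> 1 \<and>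
     (\<forall>t<m. \<bar>relu_approx \<beta> hs X d (take t b) - relu (dotd d w (X (take t b)))\<bar> \<le> \<beta>)"
proof -
  obtain hs where hs: "set hs \<subseteq> {..<m} \<times> UNIV"
    "length hs * \<beta>^2 + sqdist d (path_weight \<beta> hs X b m) w \<le> dotd d w w"
    "\<forall>s<m. \<bar>relu (dotd d (path_weight \<beta> hs X b (Suc s)) (X (take s b)))
             - relu (dotd d w (X (take s b)))\<bar> \<le> \<beta>"
    using greedy_path_corrections[where \<beta> = \<beta> and m = m and d = d and X = X and b = b
        and t = m and w = w, OF assms(1,3) order.refl]
    by auto
  moreover have "length hs * \<beta>^2 \<le> 1"
    using hs(2) assms(4) sqdist_nonneg[of d "path_weight \<beta> hs X b m" w] by linarith
  ultimately show ?thesis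
    using assms(2) by (auto simp: relu_approx_take)
qed

section \<open>Chaining\<close>

definition sparse_corrections :: "nat \<Rightarrow> nat \<Rightarrow> (nat \<times> bool) list set" where
  "sparse_corrections m M = {hs. set hs \<subseteq> {..<m} \<times> UNIV \<and> length hs \<le> M}"

lemma finite_sparse_corrections: "finite (sparse_corrections m M)"
  unfolding sparse_corrections_def by (rule finite_lists_length_le) auto

lemma sum_power_le_Suc_power: "(\<Sum>i\<le>M. (a::nat)^i) \<le> (a + 1)^M"
proof (induction M)
  case (Suc M)
  have "(\<Sum>i\<le>Suc M. a^i) = 1 + a * (\<Sum>i\<le>M. a^i)"
    unfolding sum.atMost_Suc_shift power_Suc sum_distrib_left by simp
  also have "\<dots> \<le> 1 + a * (a + 1)^M"
    using Suc by simp
  also have "\<dots> \<le> (a + 1)^Suc M"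
    using one_le_power[of "a + 1" M] by (simp add: algebra_simps)
  finally show ?case .
qed simp

lemma card_sparse_corrections: "card (sparse_corrections m M) \<le> (2 * m + 1)^M"
proof -
  have "card (sparse_corrections m M) = (\<Sum>i\<le>M. card ({..<m} \<times> (UNIV::bool set))^i)"
    unfolding sparse_corrections_def by (rule card_lists_length_le) auto
  also have "card ({..<m} \<times> (UNIV::bool set)) = 2 * m"
    by (simp add: card_cartesian_product)
  also have "(\<Sum>i\<le>M. (2 * m)^i) \<le> (2 * m + 1)^M"
    by (rule sum_power_le_Suc_power)
  finally show ?thesis .
qed

text \<open>The clamping keeps every member bounded, which the maximal inequality needs;
  on the pairs actually used in the chaining it is the identity.\<close>

definition increment_class ::
  "(bool list \<Rightarrow> nat \<Rightarrow> real) \<Rightarrow> nat \<Rightarrow> nat \<Rightarrow> nat \<Rightarrow> (bool list \<Rightarrow> real) set" where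
  "increment_class X d m j = (\<lambda>(hs, hs', \<sigma>) u. \<sigma> * clamp (- (3 / 2^j)) (3 / 2^j)
      (relu_approx (1 / 2^j) hs X d u - relu_approx (1 / 2^(j - 1)) hs' X d u))
    ` (sparse_corrections m (4^j) \<times> sparse_corrections m (4^(j - 1)) \<times> {1, -1})"

lemma finite_increment_class: "finite (increment_class X d m j)"
  unfolding increment_class_def using finite_sparse_corrections by auto

lemma increment_class_not_empty: "increment_class X d m j \<noteq> {}"
proof -
  have "[] \<in> sparse_corrections m M" for M
    unfolding sparse_corrections_def by simp
  thus ?thesis
    unfolding increment_class_def by blast
qed

lemma abs_clamp_le: "c \<ge> 0 \<Longrightarrow> \<bar>clamp (- c) c z\<bar> \<le> (c::real)"
  using clamp_in_interval[of "- c" c z] by (simp add: abs_le_iff)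

lemma abs_le_if_increment_class: "f \<in> increment_class X d m j \<Longrightarrow> \<bar>f u\<bar> \<le> 3 / 2^j"
  unfolding increment_class_def by (auto simp: abs_mult abs_clamp_le)

lemma ln_card_increment_class_le:
  assumes "m \<ge> 1"
  shows "ln (card (increment_class X d m j)) \<le> 3 * 4^j * ln (2 * real m + 1)"
proof -
  define N where "N = (2 * real m + 1)"
  have "card (increment_class X d m j)
      \<le> card (sparse_corrections m (4^j) \<times> sparse_corrections m (4^(j - 1)) \<times> {1::real, -1})"
    unfolding increment_class_def by (rule card_image_le) (simp add: finite_sparse_corrections)
  also have "\<dots> = card (sparse_corrections m (4^j)) * (card (sparse_corrections m (4^(j - 1))) * 2)"
    by (simp add: card_cartesian_product)
  also have "\<dots> \<le> (2 * m + 1)^(4^j) * ((2 * m + 1)^(4^(j - 1)) * 2)"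
    by (intro mult_le_mono card_sparse_corrections order.refl)
  finally have "real (card (increment_class X d m j))
      \<le> real ((2 * m + 1)^(4^j) * ((2 * m + 1)^(4^(j - 1)) * 2))"
    by (simp only: of_nat_le_iff)
  also have "\<dots> = 2 * N^(4^j) * N^(4^(j - 1))"
    unfolding N_def by (simp add: add.commute)
  finally have "real (card (increment_class X d m j)) \<le> 2 * N^(4^j) * N^(4^(j - 1))" .
  moreover have "card (increment_class X d m j) > 0"
    by (simp add: card_gt_0_iff finite_increment_class increment_class_not_empty)
  ultimately have "ln (card (increment_class X d m j)) \<le> ln (2 * N^(4^j) * N^(4^(j - 1)))"
    by simp
  also have "\<dots> = ln 2 + 4^j * ln N + 4^(j - 1) * ln N"
    unfolding N_def by (simp add: ln_mult ln_realpow)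
  also have "\<dots> \<le> 4^j * ln N + 4^j * ln N + 4^j * ln N"
  proof -
    have "ln 2 \<le> ln N" "ln N \<ge> 0"
      using assms unfolding N_def by simp_all
    moreover have "4^(j - 1) * ln N \<le> 4^j * ln N"
      using \<open>ln N \<ge> 0\<close> by (intro mult_right_mono) (simp_all add: power_increasing)
    moreover have "ln N \<le> 4^j * ln N"
      using \<open>ln N \<ge> 0\<close> by (simp add: mult_le_cancel_right1)
    ultimately show ?thesis
      by linarith
  qed
  finally show ?thesis
    unfolding N_def by simp
qed

lemma increment_class_memI:
  assumes "hs \<in> sparse_corrections m (4^Suc j)" "hs' \<in> sparse_corrections m (4^j)" "\<sigma> \<in> {1, -1}"
  shows "(\<lambda>u. \<sigma> * clamp (- (3 / 2^Suc j)) (3 / 2^Suc j)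
      (relu_approx (1 / 2^Suc j) hs X d u - relu_approx (1 / 2^j) hs' X d u)) \<in> increment_class X d m (Suc j)"
  unfolding increment_class_def using assms by (intro image_eqI[of _ _ "(hs, hs', \<sigma>)"]) auto

lemma abs_signed_path_sum_le_Max:
  assumes "finite D" "\<And>\<sigma>. \<sigma> \<in> {1, -1} \<Longrightarrow> (\<lambda>u. \<sigma> * clamp (- c) c (g u)) \<in> D"
    and "\<And>t. t < m \<Longrightarrow> \<bar>g (take t b)\<bar> \<le> c"
  shows "\<bar>signed_path_sum m g b\<bar> \<le> Max ((\<lambda>f. signed_path_sum m f b) ` D)"
proof -
  have "signed_path_sum m (\<lambda>u. \<sigma> * clamp (- c) c (g u)) b = \<sigma> * signed_path_sum m g b" for \<sigma>
  proof -
    have "g (take t b) \<in> cbox (- c) c" if "t < m" for t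
      using assms(3)[OF that] by (auto simp: abs_le_iff)
    hence "signed_path_sum m (\<lambda>u. clamp (- c) c (g u)) b = signed_path_sum m g b"
      by (intro signed_path_sum_cong clamp_cancel_cbox)
    thus ?thesis
      by (simp add: signed_path_sum_cmult)
  qed
  hence "\<sigma> * signed_path_sum m g b \<in> (\<lambda>f. signed_path_sum m f b) ` D" if "\<sigma> \<in> {1, -1}" for \<sigma>
    using assms(2)[OF that] by (metis image_eqI)
  hence "\<sigma> * signed_path_sum m g b \<le> Max ((\<lambda>f. signed_path_sum m f b) ` D)" if "\<sigma> \<in> {1, -1}" for \<sigma>
    using that assms(1) by (intro Max_ge) auto
  from this[of 1] this[of "-1"] show ?thesis
    by (simp add: abs_le_iff)
qed

lemma exists_dyadic_relu_approx:
  assumes "length b = m" and points: "\<And>t. t < m \<Longrightarrow> dotd d (X (take t b)) (X (take t b)) \<le> 1"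
    and "dotd d w w \<le> 1"
  shows "\<exists>H. H 0 = [] \<and> (\<forall>j. H j \<in> sparse_corrections m (4^j) \<and> (\<forall>t<m.
    \<bar>relu_approx (1 / 2^j) (H j) X d (take t b) - relu (dotd d w (X (take t b)))\<bar> \<le> 1 / 2^j))"
proof -
  have "\<exists>hs. (j = 0 \<longrightarrow> hs = []) \<and> hs \<in> sparse_corrections m (4^j) \<and> (\<forall>t<m.
    \<bar>relu_approx (1 / 2^j) hs X d (take t b) - relu (dotd d w (X (take t b)))\<bar> \<le> 1 / 2^j)" for j
  proof (cases "j = 0")
    case True
    have "\<bar>relu (dotd d w (X (take t b)))\<bar> \<le> 1" if "t < m" for t
      using dotd_le_half_sum[of d w "X (take t b)"] points[OF that] assms(3)
      by (simp add: relu_def)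
    then show ?thesis
      using True by (intro exI[of _ "[]"]) (simp add: relu_approx_Nil sparse_corrections_def)
  next
    case False
    obtain hs where hs: "set hs \<subseteq> {..<m} \<times> UNIV" "length hs * (1 / 2^j)^2 \<le> (1::real)"
      "\<forall>t<m. \<bar>relu_approx (1 / 2^j) hs X d (take t b) - relu (dotd d w (X (take t b)))\<bar> \<le> 1 / 2^j"
      using exists_sparse_relu_approx[of "1 / 2^j" b m d X w] assms by auto
    have "(1 / 2^j)^2 = (1 / 4^j :: real)"
      by (simp add: power_divide power2_eq_square flip: power_mult_distrib)
    hence "length hs \<le> 4^j"
      using hs(2) by (simp add: field_simps flip: of_nat_le_iff)
    then show ?thesis
      using False hs by (auto simp: sparse_corrections_def)
  qed
  then obtain H where "\<forall>j. (j = 0 \<longrightarrow> H j = []) \<and> H j \<in> sparse_corrections m (4^j) \<and> (\<forall>t<m.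
    \<bar>relu_approx (1 / 2^j) (H j) X d (take t b) - relu (dotd d w (X (take t b)))\<bar> \<le> 1 / 2^j)"
    by metis
  then show ?thesis
    by blast
qed

lemma abs_signed_path_sum_increment_le:
  assumes "hs \<in> sparse_corrections m (4^Suc j)" "hs' \<in> sparse_corrections m (4^j)"
    and "\<And>t. t < m \<Longrightarrow> \<bar>relu_approx (1 / 2^Suc j) hs X d (take t b) - f (take t b)\<bar> \<le> 1 / 2^Suc j"
    and "\<And>t. t < m \<Longrightarrow> \<bar>relu_approx (1 / 2^j) hs' X d (take t b) - f (take t b)\<bar> \<le> 1 / 2^j"
  shows "\<bar>signed_path_sum m (\<lambda>u. relu_approx (1 / 2^Suc j) hs X d u - relu_approx (1 / 2^j) hs' X d u) b\<bar>
    \<le> Max ((\<lambda>g. signed_path_sum m g b) ` increment_class X d m (Suc j))"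
proof (rule abs_signed_path_sum_le_Max[where c = "3 / 2^Suc j"])
  show "finite (increment_class X d m (Suc j))"
    by (rule finite_increment_class)
  show "(\<lambda>u. \<sigma> * clamp (- (3 / 2^Suc j)) (3 / 2^Suc j)
      (relu_approx (1 / 2^Suc j) hs X d u - relu_approx (1 / 2^j) hs' X d u))
    \<in> increment_class X d m (Suc j)" if "\<sigma> \<in> {1, -1}" for \<sigma>
    using assms(1,2) that by (rule increment_class_memI)
  show "\<bar>relu_approx (1 / 2^Suc j) hs X d (take t b) - relu_approx (1 / 2^j) hs' X d (take t b)\<bar>
    \<le> 3 / 2^Suc j" if "t < m" for t
    using assms(3,4)[OF that] by simp
qed

definition chaining_bound :: "(bool list \<Rightarrow> nat \<Rightarrow> real) \<Rightarrow> nat \<Rightarrow> nat \<Rightarrow> nat \<Rightarrow> bool list \<Rightarrow> real" where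
  "chaining_bound X d m J b = real m / 2^J
     + (\<Sum>j<J. Max ((\<lambda>f. signed_path_sum m f b) ` increment_class X d m (Suc j)))"

lemma abs_signed_path_sum_relu_le_chaining_bound:
  assumes "length b = m" "\<And>t. t < m \<Longrightarrow> dotd d (X (take t b)) (X (take t b)) \<le> 1"
    and "dotd d w w \<le> 1"
  shows "\<bar>signed_path_sum m (\<lambda>u. relu (dotd d w (X u))) b\<bar> \<le> chaining_bound X d m J b"
proof -
  obtain H where H0: "H 0 = []" and H: "\<And>j. H j \<in> sparse_corrections m (4^j)"
    and close: "\<And>j t. t < m \<Longrightarrow>
      \<bar>relu_approx (1 / 2^j) (H j) X d (take t b) - relu (dotd d w (X (take t b)))\<bar> \<le> 1 / 2^j"
    using exists_dyadic_relu_approx[where b = b and m = m and d = d and X = X and w = w, OF assms]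
    by blast
  define f where "f u = relu (dotd d w (X u))" for u
  define v where "v j u = relu_approx (1 / 2^j) (H j) X d u" for j u
  define S where "S g = signed_path_sum m g b" for g
  have "f = (\<lambda>u. (f u - v J u) + (\<Sum>j<J. v (Suc j) u - v j u))"
    using sum_lessThan_telescope[of "\<lambda>j. v j _" J] by (simp add: v_def H0 relu_approx_Nil)
  hence "S f = S (\<lambda>u. (f u - v J u) + (\<Sum>j<J. v (Suc j) u - v j u))"
    by (rule arg_cong)
  also have "\<dots> = S (\<lambda>u. f u - v J u) + (\<Sum>j<J. S (\<lambda>u. v (Suc j) u - v j u))"
    unfolding S_def by (simp only: signed_path_sum_add signed_path_sum_sum)
  finally have decomp: "S f = S (\<lambda>u. f u - v J u) + (\<Sum>j<J. S (\<lambda>u. v (Suc j) u - v j u))" .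
  have level: "\<bar>S (\<lambda>u. v (Suc j) u - v j u)\<bar>
      \<le> Max ((\<lambda>g. signed_path_sum m g b) ` increment_class X d m (Suc j))" for j
    unfolding S_def v_def using H[of "Suc j"] H[of j] close[of _ "Suc j"] close[of _ j]
    by (rule abs_signed_path_sum_increment_le)
  have "\<bar>S f\<bar> \<le> \<bar>S (\<lambda>u. f u - v J u)\<bar> + \<bar>\<Sum>j<J. S (\<lambda>u. v (Suc j) u - v j u)\<bar>"
    unfolding decomp by (rule abs_triangle_ineq)
  also have "\<dots> \<le> real m * (1 / 2^J)
      + (\<Sum>j<J. Max ((\<lambda>g. signed_path_sum m g b) ` increment_class X d m (Suc j)))"
  proof (rule add_mono)
    show "\<bar>S (\<lambda>u. f u - v J u)\<bar> \<le> real m * (1 / 2^J)"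
      unfolding S_def using close by (intro abs_signed_path_sum_le) (simp add: f_def v_def abs_minus_commute)
    show "\<bar>\<Sum>j<J. S (\<lambda>u. v (Suc j) u - v j u)\<bar>
        \<le> (\<Sum>j<J. Max ((\<lambda>g. signed_path_sum m g b) ` increment_class X d m (Suc j)))"
      using sum_abs sum_mono[OF level] by (rule order_trans)
  qed
  finally show ?thesis
    unfolding chaining_bound_def S_def f_def by simp
qed

lemma path_sum_Max_increment_class_le:
  assumes "m \<ge> 1"
  shows "path_sum m (\<lambda>b. Max ((\<lambda>f. signed_path_sum m f b) ` increment_class X d m j))
    \<le> 2^m * (3 * sqrt 6 * sqrt (ln (2 * real m + 1) * m))"
proof -
  define L where "L = 3 * 4^j * ln (2 * real m + 1)"
  have "L > 0"
    using assms unfolding L_def by simp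
  have "path_sum m (\<lambda>b. Max ((\<lambda>f. signed_path_sum m f b) ` increment_class X d m j))
      \<le> 2^m * (3 / 2^j * sqrt (2 * real m * L))"
    using assms \<open>L > 0\<close> ln_card_increment_class_le[OF assms, of X d j] unfolding L_def
    by (intro path_sum_Max_signed_path_sum_le_sqrt)
      (simp_all add: finite_increment_class increment_class_not_empty abs_le_if_increment_class)
  also have "3 / 2^j * sqrt (2 * real m * L) = 3 * sqrt 6 * sqrt (ln (2 * real m + 1) * m)"
  proof -
    have "(4::real)^j = (2^j)^2"
      by (simp add: power2_eq_square flip: power_mult_distrib)
    hence "sqrt (2 * real m * L) = sqrt ((2^j)^2 * (6 * (ln (2 * real m + 1) * m)))"
      unfolding L_def by (simp add: algebra_simps)
    also have "\<dots> = 2^j * sqrt (6 * (ln (2 * real m + 1) * m))"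
      by (simp only: real_sqrt_mult real_sqrt_abs) simp
    finally have sqrt_eq: "sqrt (2 * real m * L) = 2^j * sqrt (6 * (ln (2 * real m + 1) * m))" .
    show ?thesis
      unfolding sqrt_eq by (simp add: real_sqrt_mult)
  qed
  finally show ?thesis .
qed

section \<open>From shattering to a bound on the depth\<close>

lemma seq_shattered_mono:
  "seq_shattered F X \<alpha> m xt st \<Longrightarrow> F \<subseteq> G \<Longrightarrow> seq_shattered G X \<alpha> m xt st"
  unfolding seq_shattered_def by blast

lemma seq_shattered_threshold_bounds:
  assumes "seq_shattered F X \<alpha> m xt st" "\<forall>f\<in>F. \<forall>x. \<bar>f x\<bar> \<le> 1" "length u < m"
  shows "st u + \<alpha> \<le> 1" "-1 \<le> st u - \<alpha>"
proof -
  have witness: "\<exists>f\<in>F. (c \<longrightarrow> f (xt u) \<ge> st u + \<alpha>) \<and> (\<not> c \<longrightarrow> f (xt u) \<le> st u - \<alpha>)" for c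
  proof -
    define b where "b = u @ c # replicate (m - length u - 1) c"
    have b: "length b = m" "take (length u) b = u" "b ! length u = c"
      using assms(3) unfolding b_def by auto
    then obtain f where "f \<in> F" and f: "\<forall>t<m.
        (b ! t \<longrightarrow> f (xt (take t b)) \<ge> st (take t b) + \<alpha>) \<and>
        (\<not> b ! t \<longrightarrow> f (xt (take t b)) \<le> st (take t b) - \<alpha>)"
      using assms(1) unfolding seq_shattered_def by blast
    from f[rule_format, OF assms(3)] \<open>f \<in> F\<close> show ?thesis
      unfolding b(2,3) by blast
  qed
  from witness[of True] obtain f where "f \<in> F" "f (xt u) \<ge> st u + \<alpha>"
    by auto
  moreover from assms(2) \<open>f \<in> F\<close> have "\<bar>f (xt u)\<bar> \<le> 1"
    by blast
  ultimately show "st u + \<alpha> \<le> 1"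
    by linarith
  from witness[of False] obtain g where "g \<in> F" "g (xt u) \<le> st u - \<alpha>"
    by auto
  moreover from assms(2) \<open>g \<in> F\<close> have "\<bar>g (xt u)\<bar> \<le> 1"
    by blast
  ultimately show "-1 \<le> st u - \<alpha>"
    by linarith
qed

lemma abs_clip_le: "\<bar>clip z\<bar> \<le> 1"
  unfolding clip_def by auto

lemma clip_ge_imp_ge: "clip z \<ge> c \<Longrightarrow> c > -1 \<Longrightarrow> z \<ge> c"
  unfolding clip_def by auto

lemma clip_le_imp_le: "clip z \<le> c \<Longrightarrow> c < 1 \<Longrightarrow> z \<le> c"
  unfolding clip_def by auto

text \<open>The thresholds lie in \<open>[-1 + \<alpha>, 1 - \<alpha>]\<close>, where \<open>clip\<close> agrees with the identity on
  the relevant side.\<close>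

lemma seq_shattered_unclip:
  assumes "seq_shattered ((\<lambda>g x. clip (g x)) ` G) X \<alpha> m xt st" "\<alpha> > 0"
  shows "seq_shattered G X \<alpha> m xt st"
  unfolding seq_shattered_def
proof (intro conjI allI impI)
  show "xt u \<in> X" if "length u < m" for u
    using assms(1) that unfolding seq_shattered_def by blast
  fix b :: "bool list" assume "length b = m"
  then obtain g where "g \<in> G" and g: "\<forall>t<m.
      (b ! t \<longrightarrow> clip (g (xt (take t b))) \<ge> st (take t b) + \<alpha>) \<and>
      (\<not> b ! t \<longrightarrow> clip (g (xt (take t b))) \<le> st (take t b) - \<alpha>)"
    using assms(1) unfolding seq_shattered_def by blast
  have bounded: "\<forall>f\<in>(\<lambda>g x. clip (g x)) ` G. \<forall>x. \<bar>f x\<bar> \<le> 1"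
    by (auto simp: abs_clip_le)
  have "st (take t b) + \<alpha> \<le> 1" "-1 \<le> st (take t b) - \<alpha>" if "t < m" for t
    using seq_shattered_threshold_bounds[OF assms(1) bounded] that \<open>length b = m\<close> by auto
  hence "\<forall>t<m. (b ! t \<longrightarrow> g (xt (take t b)) \<ge> st (take t b) + \<alpha>) \<and>
      (\<not> b ! t \<longrightarrow> g (xt (take t b)) \<le> st (take t b) - \<alpha>)"
    using g assms(2) by (smt (verit) clip_ge_imp_ge clip_le_imp_le)
  with \<open>g \<in> G\<close> show "\<exists>f\<in>G. \<forall>t<m. (b ! t \<longrightarrow> st (take t b) + \<alpha> \<le> f (xt (take t b))) \<and>
      (\<not> b ! t \<longrightarrow> f (xt (take t b)) \<le> st (take t b) - \<alpha>)"
    by blast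
qed

lemma seq_shattered_margin:
  assumes "seq_shattered F X \<alpha> m xt st" "length b = m"
  shows "\<exists>f\<in>F. real m * \<alpha> \<le> signed_path_sum m (\<lambda>u. f (xt u) - st u) b"
proof -
  obtain f where "f \<in> F" and f: "\<forall>t<m.
      (b ! t \<longrightarrow> f (xt (take t b)) \<ge> st (take t b) + \<alpha>) \<and>
      (\<not> b ! t \<longrightarrow> f (xt (take t b)) \<le> st (take t b) - \<alpha>)"
    using assms unfolding seq_shattered_def by blast
  have "\<alpha> \<le> sign_of (b ! t) * (f (xt (take t b)) - st (take t b))" if "t < m" for t
    using f that by (cases "b ! t") (auto simp: sign_of_def)
  hence "(\<Sum>t<m. \<alpha>) \<le> signed_path_sum m (\<lambda>u. f (xt u) - st u) b"
    unfolding signed_path_sum_def by (intro sum_mono) auto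
  with \<open>f \<in> F\<close> show ?thesis
    by auto
qed

text \<open>Unlike in \<open>Hkd\<close>, the weight vectors need not vanish outside \<open>{..<d}\<close>; this only
  enlarges the class.\<close>

definition relu_nets :: "nat \<Rightarrow> nat \<Rightarrow> ((nat \<Rightarrow> real) \<Rightarrow> real) set" where
  "relu_nets k d = {(\<lambda>x. \<Sum>j<k. a j * relu (dotd d (w j) x)) | a w.
      (\<forall>j<k. \<bar>a j\<bar> \<le> 1) \<and> (\<forall>j<k. dotd d (w j) (w j) \<le> 1)}"

lemma Hkd_subset_clip_relu_nets: "Hkd k d \<subseteq> (\<lambda>g x. clip (g x)) ` relu_nets k d"
proof
  fix f assume "f \<in> Hkd k d"
  then obtain a w where f: "f = (\<lambda>x. clip (\<Sum>j<k. a j * max 0 (dotd d (w j) x)))"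
    and "\<forall>j<k. \<bar>a j\<bar> \<le> 1" "\<forall>j<k. sqrt (dotd d (w j) (w j)) \<le> 1"
    unfolding Hkd_def by blast
  hence "(\<lambda>x. \<Sum>j<k. a j * max 0 (dotd d (w j) x)) \<in> relu_nets k d"
    unfolding relu_nets_def relu_def by auto
  thus "f \<in> (\<lambda>g x. clip (g x)) ` relu_nets k d"
    unfolding f by (rule rev_image_eqI) simp
qed

lemma signed_path_sum_relu_net_le:
  assumes "f \<in> relu_nets k d" "length b = m"
    and "\<And>t. t < m \<Longrightarrow> dotd d (X (take t b)) (X (take t b)) \<le> 1"
  shows "signed_path_sum m (\<lambda>u. f (X u)) b \<le> real k * chaining_bound X d m J b"
proof -
  obtain a w where f: "f = (\<lambda>x. \<Sum>j<k. a j * relu (dotd d (w j) x))"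
    and a: "\<forall>j<k. \<bar>a j\<bar> \<le> 1" and w: "\<forall>j<k. dotd d (w j) (w j) \<le> 1"
    using assms(1) unfolding relu_nets_def by blast
  have "signed_path_sum m (\<lambda>u. f (X u)) b
      = (\<Sum>j<k. a j * signed_path_sum m (\<lambda>u. relu (dotd d (w j) (X u))) b)"
    unfolding f by (simp add: signed_path_sum_sum signed_path_sum_cmult)
  also have "\<dots> \<le> (\<Sum>j<k. chaining_bound X d m J b)"
  proof (rule sum_mono)
    fix j assume "j \<in> {..<k}"
    hence "\<bar>a j\<bar> \<le> 1" "dotd d (w j) (w j) \<le> 1"
      using a w by auto
    moreover have "\<bar>signed_path_sum m (\<lambda>u. relu (dotd d (w j) (X u))) b\<bar> \<le> chaining_bound X d m J b"
      by (rule abs_signed_path_sum_relu_le_chaining_bound) (use assms(2,3) calculation in auto)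
    ultimately have "\<bar>a j\<bar> * \<bar>signed_path_sum m (\<lambda>u. relu (dotd d (w j) (X u))) b\<bar> \<le> 1 * chaining_bound X d m J b"
      by (intro mult_mono) auto
    moreover have "a j * signed_path_sum m (\<lambda>u. relu (dotd d (w j) (X u))) b
        \<le> \<bar>a j\<bar> * \<bar>signed_path_sum m (\<lambda>u. relu (dotd d (w j) (X u))) b\<bar>"
      unfolding abs_mult[symmetric] by (rule abs_ge_self)
    ultimately show "a j * signed_path_sum m (\<lambda>u. relu (dotd d (w j) (X u))) b \<le> chaining_bound X d m J b"
      by linarith
  qed
  finally show ?thesis
    by simp
qed

lemma shattered_depth_le_chaining:
  assumes "seq_shattered (Hkd k d) (Xdom d) \<alpha> m xt st" "\<alpha> > 0" "m \<ge> 1"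
  shows "real m * \<alpha> \<le> real k * (real m / 2^J + J * (3 * sqrt 6 * sqrt (ln (2 * real m + 1) * m)))"
proof -
  define q where "q = 3 * sqrt 6 * sqrt (ln (2 * real m + 1) * m)"
  have sh: "seq_shattered (relu_nets k d) (Xdom d) \<alpha> m xt st"
    using seq_shattered_mono[OF assms(1) Hkd_subset_clip_relu_nets] assms(2)
    by (rule seq_shattered_unclip)
  have "real m * \<alpha> \<le> real k * chaining_bound xt d m J b - signed_path_sum m st b"
    if len: "length b = m" for b
  proof -
    obtain f where "f \<in> relu_nets k d" and margin: "real m * \<alpha> \<le> signed_path_sum m (\<lambda>u. f (xt u) - st u) b"
      using seq_shattered_margin[OF sh len] by blast
    have "dotd d (xt (take t b)) (xt (take t b)) \<le> 1" if "t < m" for t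
      using assms(1) that \<open>length b = m\<close> unfolding seq_shattered_def Xdom_def by auto
    with \<open>f \<in> relu_nets k d\<close> len
    have "signed_path_sum m (\<lambda>u. f (xt u)) b \<le> real k * chaining_bound xt d m J b"
      by (intro signed_path_sum_relu_net_le)
    with margin show ?thesis
      by (simp add: signed_path_sum_diff)
  qed
  hence "path_sum m (\<lambda>b. real m * \<alpha>)
      \<le> path_sum m (\<lambda>b. real k * chaining_bound xt d m J b - signed_path_sum m st b)"
    by (rule path_sum_mono)
  hence "2^m * (real m * \<alpha>) \<le> real k * path_sum m (chaining_bound xt d m J)"
    by (simp add: path_sum_const path_sum_diff path_sum_cmult path_sum_signed_path_sum)
  also have "path_sum m (chaining_bound xt d m J) \<le> 2^m * (real m / 2^J + J * q)"
  proof -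
    have "path_sum m (chaining_bound xt d m J) = 2^m * (real m / 2^J)
        + (\<Sum>j<J. path_sum m (\<lambda>b. Max ((\<lambda>f. signed_path_sum m f b) ` increment_class xt d m (Suc j))))"
      unfolding chaining_bound_def by (simp add: path_sum_add path_sum_const path_sum_sum)
    also have "\<dots> \<le> 2^m * (real m / 2^J) + (\<Sum>j<J. 2^m * q)"
      unfolding q_def using assms(3) by (intro add_left_mono sum_mono path_sum_Max_increment_class_le)
    finally show ?thesis
      by (simp add: algebra_simps)
  qed
  finally show ?thesis
    unfolding q_def by (simp add: mult_left_mono)
qed

lemma shattered_depth_bound:
  assumes "seq_shattered (Hkd k d) (Xdom d) \<alpha> m xt st" "\<alpha> > 0" "m \<ge> 1"
    and "2 * real k \<le> 2^J * \<alpha>"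
  shows "real m * \<alpha>^2 \<le> 216 * real k^2 * real J^2 * ln (2 * real m + 1)"
proof -
  define q where "q = sqrt (ln (2 * real m + 1) * m)"
  have "real k / 2^J \<le> \<alpha> / 2"
    using assms(4) by (simp add: field_simps)
  hence "real m * (real k / 2^J) \<le> real m * (\<alpha> / 2)"
    by (intro mult_left_mono) auto
  hence "real k * (real m / 2^J) \<le> real m * \<alpha> / 2"
    by (simp add: mult.commute)
  moreover have "real m * \<alpha> \<le> real k * (real m / 2^J) + real k * (J * (3 * sqrt 6 * q))"
    using shattered_depth_le_chaining[OF assms(1-3), of J] unfolding q_def distrib_left .
  ultimately have "real m * \<alpha> \<le> 2 * (real k * (J * (3 * sqrt 6 * q)))"
    by linarith
  hence "(real m * \<alpha>)^2 \<le> (2 * (real k * (J * (3 * sqrt 6 * q))))^2"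
    using assms(2) by (intro power_mono) auto
  also have "\<dots> = real m * (216 * real k^2 * real J^2 * ln (2 * real m + 1))"
    unfolding q_def by (simp add: power_mult_distrib)
  finally have "real m * (real m * \<alpha>^2) \<le> real m * (216 * real k^2 * real J^2 * ln (2 * real m + 1))"
    by (simp add: power_mult_distrib power2_eq_square mult_ac)
  thus ?thesis
    using assms(3) by simp
qed

lemma le_mult_ln_imp_le:
  fixes A x :: real
  assumes "A \<ge> 1" "x \<ge> 0" "x \<le> A * ln (2 * x + 1)"
  shows "x \<le> A * (ln 25 + 2 * ln A)"
proof -
  define y where "y = 2 * x + 1"
  have "y \<ge> 1"
    unfolding y_def using assms(2) by simp
  have "ln (sqrt y) \<le> sqrt y - 1"
    using \<open>y \<ge> 1\<close> by (intro ln_le_minus_one) auto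
  hence "ln y \<le> 2 * sqrt y"
    using \<open>y \<ge> 1\<close> by (simp add: ln_sqrt)
  hence "A * ln y \<le> A * (2 * sqrt y)"
    using assms(1) by (intro mult_left_mono) auto
  hence "x \<le> 2 * A * sqrt y"
    using assms(3) unfolding y_def by linarith
  have "x \<le> 12 * A^2"
  proof (cases "x \<le> 1")
    case False
    have "x^2 \<le> (2 * A * sqrt y)^2"
      using \<open>x \<le> 2 * A * sqrt y\<close> assms(2) by (intro power_mono) auto
    also have "\<dots> = 4 * A^2 * y"
      using \<open>y \<ge> 1\<close> by (simp add: power_mult_distrib)
    also have "\<dots> \<le> 4 * A^2 * (3 * x)"
      unfolding y_def using False by (intro mult_left_mono) auto
    finally show ?thesis
      using False by (simp add: power2_eq_square)
  qed (use assms(1) one_le_power[of A 2] in linarith)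
  hence "y \<le> 25 * A^2"
    unfolding y_def using assms(1) one_le_power[of A 2] by linarith
  hence "ln y \<le> ln 25 + 2 * ln A"
    using \<open>y \<ge> 1\<close> assms(1) by (simp add: ln_mult ln_realpow flip: ln_le_cancel_iff)
  hence "A * ln y \<le> A * (ln 25 + 2 * ln A)"
    using assms(1) by (intro mult_left_mono) auto
  thus ?thesis
    using assms(3) unfolding y_def by linarith
qed

lemma exists_pow2_ge_double:
  assumes "r \<ge> (1::real)"
  shows "\<exists>J::nat. 2 * r \<le> 2^J \<and> real J \<le> 3 * ln (exp 1 * r)"
proof -
  define J where "J = nat \<lceil>log 2 r\<rceil> + 1"
  have "log 2 r \<ge> 0"
    using assms by simp
  hence J: "log 2 r + 1 \<le> real J" "real J \<le> log 2 r + 2"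
    unfolding J_def by linarith+
  have "2 * r = 2 powr (log 2 r + 1)"
    using assms by (simp add: powr_add)
  also have "\<dots> \<le> 2^J"
    using J(1) by (simp add: powr_realpow[symmetric])
  finally have "2 * r \<le> 2^J" .
  moreover have "log 2 r \<le> 3 / 2 * ln r"
    using ln2_ge_two_thirds assms unfolding log_def by (simp add: field_simps mult_left_mono)
  moreover have "ln (exp 1 * r) = 1 + ln r" "ln r \<ge> 0"
    using assms by (simp_all add: ln_mult)
  ultimately show ?thesis
    using J(2) by (intro exI[of _ J]) simp
qed

lemma le_cube_if_le_mult_ln:
  fixes r L x :: real
  assumes "1 \<le> r" "1 \<le> L" "r \<le> exp L" "0 \<le> x" "x \<le> 1944 * r^2 * L^2 * ln (2 * x + 1)"
  shows "x \<le> 10^7 * r^2 * L^3"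
proof -
  define A where "A = 1944 * r^2 * L^2"
  have "1 * 1 \<le> r^2 * L^2"
    using assms(1,2) by (intro mult_mono) simp_all
  hence "1 \<le> A"
    unfolding A_def by simp
  have "ln A = ln 1944 + 2 * ln r + 2 * ln L"
    unfolding A_def using assms(1,2) by (simp add: ln_mult ln_realpow)
  moreover have "ln r \<le> L"
    using assms(1,3) ln_le_cancel_iff[of r "exp L"] by simp
  moreover have "ln L \<le> L" "ln (1944::real) \<le> 1943" "ln (25::real) \<le> 24"
    using ln_le_minus_one[of L] ln_le_minus_one[of 1944] ln_le_minus_one[of 25] assms(2) by simp_all
  ultimately have "ln 25 + 2 * ln A \<le> 3918 * L"
    using assms(2) by linarith
  hence "A * (ln 25 + 2 * ln A) \<le> A * (3918 * L)"
    using \<open>1 \<le> A\<close> by (intro mult_left_mono) auto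
  moreover have "x \<le> A * (ln 25 + 2 * ln A)"
    using le_mult_ln_imp_le[OF \<open>1 \<le> A\<close> assms(4)] assms(5) unfolding A_def by simp
  moreover have "A * (3918 * L) \<le> 10^7 * r^2 * L^3"
    unfolding A_def using assms(1,2) by (simp add: power2_eq_square power3_eq_cube)
  ultimately show ?thesis
    by linarith
qed

lemma shattered_depth_le:
  assumes "seq_shattered (Hkd k d) (Xdom d) \<alpha> m xt st" "k \<ge> 1" "0 < \<alpha>" "\<alpha> \<le> 1"
  shows "real m \<le> 10^7 * real k^2 / \<alpha>^2 * (ln (exp 1 * real k / \<alpha>))^3"
proof -
  define r where "r = real k / \<alpha>"
  define L where "L = ln (exp 1 * r)"
  have "1 \<le> r"
    unfolding r_def using assms(2-4) by (simp add: field_simps)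
  hence "1 \<le> L"
    unfolding L_def by (simp add: ln_mult)
  have "exp L = exp 1 * r"
    unfolding L_def using \<open>1 \<le> r\<close> by simp
  hence "r \<le> exp L"
    using \<open>1 \<le> r\<close> by simp
  have "10^7 * real k^2 / \<alpha>^2 * (ln (exp 1 * real k / \<alpha>))^3 = 10^7 * r^2 * L^3"
    unfolding r_def L_def by (simp add: power_divide)
  moreover have "real m \<le> 10^7 * r^2 * L^3"
  proof (cases "m = 0")
    case True
    then show ?thesis using \<open>1 \<le> L\<close> by simp
  next
    case False
    obtain J :: nat where J: "2 * r \<le> 2^J" "real J \<le> 3 * L"
      using exists_pow2_ge_double[OF \<open>1 \<le> r\<close>] unfolding L_def by blast
    have "2 * real k \<le> 2^J * \<alpha>"
      using J(1) assms(3) unfolding r_def by (simp add: field_simps)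
    hence "real m * \<alpha>^2 \<le> 216 * real k^2 * real J^2 * ln (2 * real m + 1)"
      using False assms(1,3) by (intro shattered_depth_bound) auto
    also have "\<dots> \<le> 216 * real k^2 * (3 * L)^2 * ln (2 * real m + 1)"
      using J(2) by (intro mult_left_mono mult_right_mono power_mono) auto
    finally have "real m \<le> 1944 * r^2 * L^2 * ln (2 * real m + 1)"
      unfolding r_def using assms(3) by (simp add: field_simps power_mult_distrib)
    with \<open>1 \<le> r\<close> \<open>1 \<le> L\<close> \<open>r \<le> exp L\<close> show ?thesis
      by (intro le_cube_if_le_mult_ln) auto
  qed
  ultimately show ?thesis
    by simp
qed

lemma seq_fat_le_if_shattered_le:
  assumes "B \<ge> 0" "\<And>m xt st. seq_shattered F X \<alpha> m xt st \<Longrightarrow> real m \<le> B"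
  shows "ereal_of_enat (seq_fat \<alpha> F X) \<le> ereal B"
proof -
  have "seq_fat \<alpha> F X \<le> enat (nat \<lfloor>B\<rfloor>)"
    unfolding seq_fat_def using assms(2) by (auto intro!: Sup_least simp: le_nat_floor)
  hence "ereal_of_enat (seq_fat \<alpha> F X) \<le> ereal (real (nat \<lfloor>B\<rfloor>))"
    by (metis ereal_of_enat_le_iff ereal_of_enat_simps(1))
  also have "\<dots> \<le> ereal B"
    using assms(1) by simp
  finally show ?thesis .
qed

theorem propositionC4:
  shows "\<exists>C::real. C > 0 \<and> (\<forall>d k::nat. \<forall>\<alpha>::real. d \<ge> 1 \<longrightarrow> k \<ge> 1 \<longrightarrow> 0 < \<alpha> \<longrightarrow> \<alpha> \<le> 1 \<longrightarrow>
     ereal_of_enat (seq_fat \<alpha> (Hkd k d) (Xdom d))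
       \<le> ereal (C * real k ^ 2 / \<alpha> ^ 2 * (ln (exp 1 * real k / \<alpha>)) ^ 3))"
proof (intro exI[of _ "10^7"] conjI allI impI)
  fix d k :: nat and \<alpha> :: real
  assume "k \<ge> 1" "0 < \<alpha>" "\<alpha> \<le> 1"
  have "1 * 1 \<le> exp 1 * real k"
    using \<open>k \<ge> 1\<close> by (intro mult_mono) simp_all
  hence "1 \<le> exp 1 * real k / \<alpha>"
    using \<open>0 < \<alpha>\<close> \<open>\<alpha> \<le> 1\<close> by (simp add: field_simps)
  hence "0 \<le> 10^7 * real k ^ 2 / \<alpha> ^ 2 * (ln (exp 1 * real k / \<alpha>)) ^ 3"
    by simp
  with shattered_depth_le[OF _ \<open>k \<ge> 1\<close> \<open>0 < \<alpha>\<close> \<open>\<alpha> \<le> 1\<close>]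
  show "ereal_of_enat (seq_fat \<alpha> (Hkd k d) (Xdom d))
      \<le> ereal (10^7 * real k ^ 2 / \<alpha> ^ 2 * (ln (exp 1 * real k / \<alpha>)) ^ 3)"
    by (intro seq_fat_le_if_shattered_le)
qed simp

end
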